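(* Let $\alpha\in(0,1)$ be an irrational number with bounded partial quotients, and let $s_\alpha$ be a Sturmian word of angle $\alpha$. Then there exists a positive constant $C$ such that for every sufficiently large $n$, $\sum_{m\le n}\mathit{ASF}_{s_\alpha}(m)\ge Cn^2$.
   Context: Alphabet $\{a,b\}$; $\{x\}=x-\lfloor x\rfloor$. For irrational $\alpha\in(0,1)$ and $\rho\in[0,1)$, the Sturmian word $s_{\alpha,\rho}=c_0c_1\cdots$ has $c_m=b$ if $\{\rho+m\alpha\}\in[0,1-\alpha)$ and $c_m=a$ otherwise (or with intervals $(0,1-\alpha]$ and $(1-\alpha,1]$); all these have the same set of factors, and $s_\alpha$ denotes any of them. $\alpha$ has bounded partial quotients if the sequence $(a_i)$ of its simple continued fraction expansion $\alpha=[a_0;a_1,a_2,\dots]$ is bounded. An abelian square is a word $v_1v_2$ with $v_1,v_2$ having the same numbers of each letter; $\mathit{ASF}_w(m)$ is the number of distinct factors of $w$ of length $m$ that are abelian squares. *)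

theory Defs
  imports Complex_Main
begin

datatype letter = a | b

fun cf_rem :: "real \<Rightarrow> nat \<Rightarrow> real" where
  "cf_rem x 0 = x"
| "cf_rem x (Suc k) = 1 / frac (cf_rem x k)"

definition partial_quotient :: "real \<Rightarrow> nat \<Rightarrow> int" where
  "partial_quotient x k = \<lfloor>cf_rem x k\<rfloor>"

definition bounded_partial_quotients :: "real \<Rightarrow> bool" where
  "bounded_partial_quotients x \<longleftrightarrow> (\<exists>B. \<forall>k. \<bar>partial_quotient x k\<bar> \<le> B)"

definition sturmian_lower :: "real \<Rightarrow> real \<Rightarrow> nat \<Rightarrow> letter" where
  "sturmian_lower \<alpha> \<rho> m =
     (if 0 \<le> frac (\<rho> + real m * \<alpha>) \<and> frac (\<rho> + real m * \<alpha>) < 1 - \<alpha> then b else a)"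

definition sturmian_upper :: "real \<Rightarrow> real \<Rightarrow> nat \<Rightarrow> letter" where
  "sturmian_upper \<alpha> \<rho> m =
     (if 0 < frac (\<rho> + real m * \<alpha>) \<and> frac (\<rho> + real m * \<alpha>) \<le> 1 - \<alpha> then b else a)"

definition is_factor :: "(nat \<Rightarrow> letter) \<Rightarrow> letter list \<Rightarrow> bool" where
  "is_factor w v \<longleftrightarrow> (\<exists>i. v = map (\<lambda>j. w (i + j)) [0..<length v])"

definition abelian_square :: "letter list \<Rightarrow> bool" where
  "abelian_square v \<longleftrightarrow>
     (\<exists>v1 v2. v = v1 @ v2 \<and> (\<forall>c. count_list v1 c = count_list v2 c))"

definition ASF :: "(nat \<Rightarrow> letter) \<Rightarrow> nat \<Rightarrow> nat" where
  "ASF w m = card {v. length v = m \<and> is_factor w v \<and> abelian_square v}"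

end

(*
  The letter at position m depends only on the phase frac (\<rho> + m \<alpha>), and the factor of phase y
  and length j contains \<lfloor>y + j \<alpha>\<rfloor> - \<lfloor>y\<rfloor> letters a. By density of the orbit, for every integer r
  the word has a factor whose phase lies just above frac (r \<alpha>), so that its prefix counts are
  \<lfloor>(r + j) \<alpha>\<rfloor> - \<lfloor>r \<alpha>\<rfloor>; since \<alpha> is irrational, different r in [-n, 0] give different factors
  of length n. For r = l - 2k the factor of length 2k is an abelian square whenever
  frac (l \<alpha>) \<ge> 2 frac (k \<alpha>). The orbit of \<alpha> modulo 1 has bounded gaps, so every block of some fixed
  length M contains a k with frac (k \<alpha>) < 1/4, and for such k about 2k/M values of l qualify;
  summing over the blocks gives the quadratic lower bound.
*)

theory Submission
  imports Defs "HOL-Analysis.Kronecker_Approximation_Theorem"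
begin

definition sturmian_letter :: "real \<Rightarrow> real \<Rightarrow> letter" where
  "sturmian_letter \<alpha> y = (if frac y < 1 - \<alpha> then b else a)"

lemma floor_add_eq_sturmian_letter:
  assumes "0 < \<alpha>" "\<alpha> < 1"
  shows "\<lfloor>y + \<alpha>\<rfloor> = \<lfloor>y\<rfloor> + (if sturmian_letter \<alpha> y = a then 1 else 0)"
proof -
  have "\<lfloor>frac y + \<alpha>\<rfloor> = (if sturmian_letter \<alpha> y = a then 1 else 0)"
    using assms frac_ge_0[of y] frac_lt_1[of y] by (auto simp: sturmian_letter_def floor_eq_iff)
  moreover have "\<lfloor>y + \<alpha>\<rfloor> = \<lfloor>frac y + \<alpha>\<rfloor> + \<lfloor>y\<rfloor>"
    using floor_add_int[of "frac y + \<alpha>" "\<lfloor>y\<rfloor>"] by (simp add: frac_def)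
  ultimately show ?thesis
    by simp
qed

lemma count_a_sturmian_letters:
  assumes "0 < \<alpha>" "\<alpha> < 1"
  shows "int (count_list (map (\<lambda>j. sturmian_letter \<alpha> (y + real j * \<alpha>)) [0..<m]) a)
           = \<lfloor>y + real m * \<alpha>\<rfloor> - \<lfloor>y\<rfloor>"
proof (induction m)
  case (Suc m)
  have "y + real (Suc m) * \<alpha> = (y + real m * \<alpha>) + \<alpha>"
    by (simp add: algebra_simps)
  then have "\<lfloor>y + real (Suc m) * \<alpha>\<rfloor>
      = \<lfloor>y + real m * \<alpha>\<rfloor> + (if sturmian_letter \<alpha> (y + real m * \<alpha>) = a then 1 else 0)"
    by (simp only: floor_add_eq_sturmian_letter[OF assms])
  with Suc show ?case
    by simp
qed simp

lemma sturmian_letter_at: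
  assumes "w = sturmian_lower \<alpha> \<rho> \<or> w = sturmian_upper \<alpha> \<rho>"
    and "0 < frac (\<rho> + real m * \<alpha>)" "0 < frac (\<rho> + real (Suc m) * \<alpha>)"
  shows "w m = sturmian_letter \<alpha> (\<rho> + real m * \<alpha>)"
proof -
  have "frac (\<rho> + real m * \<alpha>) \<noteq> 1 - \<alpha>"
  proof
    assume "frac (\<rho> + real m * \<alpha>) = 1 - \<alpha>"
    then have "\<rho> + real (Suc m) * \<alpha> = of_int (\<lfloor>\<rho> + real m * \<alpha>\<rfloor> + 1)"
      by (simp add: frac_def algebra_simps)
    then show False
      using assms(3) by (metis frac_of_int less_irrefl)
  qed
  then show ?thesis
    using assms(1,2) by (auto simp: sturmian_lower_def sturmian_upper_def sturmian_letter_def)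
qed

lemma count_list_a_add_b: "count_list v a + count_list v b = length v"
proof (induction v)
  case (Cons x v)
  then show ?case by (cases x) auto
qed simp

lemma abelian_square_if_half_count:
  assumes "length v = 2 * k" "2 * count_list (take k v) a = count_list v a"
  shows "abelian_square v"
proof -
  have "count_list v a = count_list (take k v) a + count_list (drop k v) a"
    by (metis append_take_drop_id count_list_append)
  then have "count_list (take k v) a = count_list (drop k v) a"
    using assms(2) by simp
  moreover have "length (take k v) = length (drop k v)"
    using assms(1) by simp
  ultimately have "count_list (take k v) c = count_list (drop k v) c" for c
    using count_list_a_add_b[of "take k v"] count_list_a_add_b[of "drop k v"] by (cases c) simp_all
  then show ?thesis
    unfolding abelian_square_def by (metis append_take_drop_id)
qed

lemma finite_letter_lists_length: "finite {v :: letter list. length v = m}"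
proof (rule finite_subset)
  show "{v :: letter list. length v = m} \<subseteq> {v. set v \<subseteq> {a, b} \<and> length v = m}"
    using letter.exhaust by blast
qed (simp add: finite_lists_length_eq)

lemma of_int_mult_irrational_notin_Ints:
  assumes "\<alpha> \<notin> \<rat>" "n \<noteq> 0"
  shows "of_int n * \<alpha> \<notin> \<int>"
proof
  assume "of_int n * \<alpha> \<in> \<int>"
  then obtain m where "of_int n * \<alpha> = of_int m"
    by (auto elim: Ints_cases)
  then have "\<alpha> = of_int m / of_int n"
    using assms(2) by (simp add: field_simps)
  then show False
    using assms(1) by auto
qed

lemma floor_add_floor_uminus:
  fixes x :: real
  assumes "x \<notin> \<int>"
  shows "\<lfloor>x\<rfloor> + \<lfloor>- x\<rfloor> = -1"
proof -
  have "\<lceil>x\<rceil> = \<lfloor>x\<rfloor> + 1"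
    using assms by (auto simp: ceiling_altdef) (metis Ints_of_int)
  then show ?thesis
    by (simp add: floor_minus)
qed

lemma floor_diff_double:
  fixes x y :: real
  assumes "2 * frac y \<le> frac x"
  shows "\<lfloor>x - y\<rfloor> = \<lfloor>x\<rfloor> - \<lfloor>y\<rfloor>" "\<lfloor>x - 2 * y\<rfloor> = \<lfloor>x\<rfloor> - 2 * \<lfloor>y\<rfloor>"
proof -
  have "0 \<le> frac x - 2 * frac y" "frac x < 1" "0 \<le> frac y"
    using assms frac_ge_0[of y] frac_lt_1[of x] by linarith+
  then show "\<lfloor>x - y\<rfloor> = \<lfloor>x\<rfloor> - \<lfloor>y\<rfloor>" "\<lfloor>x - 2 * y\<rfloor> = \<lfloor>x\<rfloor> - 2 * \<lfloor>y\<rfloor>"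
    unfolding frac_def by (intro floor_unique; simp; linarith)+
qed

lemma frac_floor_translate:
  fixes x y z :: real
  assumes "frac x < frac y" "frac (x + z) + (frac y - frac x) < 1"
  shows "frac (y + z) = frac (x + z) + (frac y - frac x)"
    and "\<lfloor>y + z\<rfloor> - \<lfloor>y\<rfloor> = \<lfloor>x + z\<rfloor> - \<lfloor>x\<rfloor>"
proof -
  define u where "u = frac (x + z) + (frac y - frac x)"
  have u: "0 \<le> u" "u < 1"
    using assms frac_ge_0[of "x + z"] by (auto simp: u_def)
  have eq: "y + z = u + of_int (\<lfloor>x + z\<rfloor> - \<lfloor>x\<rfloor> + \<lfloor>y\<rfloor>)"
    by (simp add: u_def frac_def)
  show "frac (y + z) = frac (x + z) + (frac y - frac x)"
    unfolding u_def[symmetric] eq frac_add_of_int_right using u by simp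
  show "\<lfloor>y + z\<rfloor> - \<lfloor>y\<rfloor> = \<lfloor>x + z\<rfloor> - \<lfloor>x\<rfloor>"
    unfolding eq using u by (simp add: floor_eq_iff)
qed

lemma frac_orbit_bounded_gaps:
  fixes \<alpha> \<epsilon> :: real
  assumes "\<alpha> \<notin> \<rat>" "\<epsilon> > 0"
  obtains M :: nat where "M > 0" "\<And>x. \<exists>d<M. frac (x + real d * \<alpha>) < \<epsilon>"
proof -
  define e where "e = min \<epsilon> 1"
  have e: "0 < e" "e \<le> 1" "e \<le> \<epsilon>"
    using assms(2) by (auto simp: e_def)
  obtain q :: nat where "q > 0" and q: "\<bar>frac (real q * \<alpha>) - e / 2\<bar> < e / 2"
    using Kronecker_approx_1_explicit[OF assms(1), of "e / 2" "e / 2"] e by auto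
  define \<theta> where "\<theta> = frac (real q * \<alpha>)"
  have "\<theta> - e / 2 < e / 2" "- (\<theta> - e / 2) < e / 2"
    using q unfolding \<theta>_def abs_less_iff by blast+
  then have \<theta>: "0 < \<theta>" "\<theta> < \<epsilon>"
    using e by linarith+
  define M where "M = (nat \<lceil>1 / \<theta>\<rceil> + 1) * q"
  have "\<exists>d<M. frac (x + real d * \<alpha>) < \<epsilon>" for x
  proof -
    \<comment> \<open>Each multiple of \<open>q\<close> advances the fractional part by \<open>\<theta>\<close>; take the first one that wraps around.\<close>
    define m where "m = nat \<lceil>(1 - frac x) / \<theta>\<rceil>"
    have "0 < (1 - frac x) / \<theta>"
      using \<theta> frac_lt_1[of x] by simp
    then have "(1 - frac x) / \<theta> \<le> real m" "real m < (1 - frac x) / \<theta> + 1"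
      unfolding m_def by linarith+
    then have wrap: "1 \<le> frac x + real m * \<theta>" "frac x + real m * \<theta> < 1 + \<theta>"
      using \<theta> by (auto simp: field_simps)
    have "(1 - frac x) / \<theta> \<le> 1 / \<theta>"
      using \<theta> by (simp add: divide_right_mono)
    then have "m \<le> nat \<lceil>1 / \<theta>\<rceil>"
      unfolding m_def by (intro nat_mono ceiling_mono)
    then have "m * q < (nat \<lceil>1 / \<theta>\<rceil> + 1) * q"
      using \<open>q > 0\<close> by (intro mult_less_mono1) auto
    then have "m * q < M"
      by (simp add: M_def)
    have eq: "x + real (m * q) * \<alpha> = (frac x + real m * \<theta> - 1) + of_int (\<lfloor>x\<rfloor> + int m * \<lfloor>real q * \<alpha>\<rfloor> + 1)"
      by (simp add: \<theta>_def frac_def algebra_simps)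
    have "\<theta> < 1"
      by (simp add: \<theta>_def frac_lt_1)
    then have "frac (x + real (m * q) * \<alpha>) = frac x + real m * \<theta> - 1"
      unfolding eq frac_add_of_int_right using wrap by simp
    with \<open>m * q < M\<close> wrap \<theta> show ?thesis
      by (intro exI[of _ "m * q"]) auto
  qed
  moreover have "M > 0"
    using \<open>q > 0\<close> by (simp add: M_def)
  ultimately show thesis
    using that by blast
qed

lemma frac_orbit_bounded_gaps_interval:
  fixes \<alpha> \<epsilon> c :: real
  assumes gaps: "\<And>x. \<exists>d<M. frac (x + real d * \<alpha>) < \<epsilon>" and "0 \<le> c" "c + \<epsilon> \<le> 1"
  shows "\<exists>d<M. c \<le> frac (x + real d * \<alpha>) \<and> frac (x + real d * \<alpha>) < c + \<epsilon>"
proof -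
  obtain d where "d < M" and d: "frac ((x - c) + real d * \<alpha>) < \<epsilon>"
    using gaps by blast
  define y where "y = (x - c) + real d * \<alpha>"
  have "(y + c) - (frac y + c) \<in> \<int>"
    by (simp add: frac_def)
  then have "frac (y + c) = frac y + c"
    unfolding frac_unique_iff using d assms(2,3) frac_ge_0[of y] by (auto simp: y_def)
  moreover have "y + c = x + real d * \<alpha>"
    by (simp add: y_def)
  ultimately show ?thesis
    using \<open>d < M\<close> d frac_ge_0[of y] by (auto simp: y_def)
qed

lemma sturmian_factor_with_prefix_counts:
  fixes \<alpha> \<rho> :: real and r :: int
  assumes "0 < \<alpha>" "\<alpha> < 1" "\<alpha> \<notin> \<rat>"
    and w: "w = sturmian_lower \<alpha> \<rho> \<or> w = sturmian_upper \<alpha> \<rho>"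
  shows "\<exists>p. \<forall>j\<le>n. int (count_list (map (\<lambda>i. w (p + i)) [0..<j]) a)
                      = \<lfloor>of_int (r + int j) * \<alpha>\<rfloor> - \<lfloor>of_int r * \<alpha>\<rfloor>"
proof -
  define \<delta> where "\<delta> = Min ((\<lambda>j. 1 - frac (of_int (r + int j) * \<alpha>)) ` {..n})"
  have "0 < \<delta>"
    unfolding \<delta>_def by (subst Min_gr_iff) (auto simp: frac_lt_1)
  have \<delta>_le: "\<delta> \<le> 1 - frac (of_int (r + int j) * \<alpha>)" if "j \<le> n" for j
    unfolding \<delta>_def using that by (intro Min_le) auto
  obtain M where "M > 0" "\<And>x. \<exists>d<M. frac (x + real d * \<alpha>) < \<delta> / 2"
    using frac_orbit_bounded_gaps[OF assms(3) half_gt_zero[OF \<open>0 < \<delta>\<close>]] by blast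
  then obtain p where p: "frac (of_int r * \<alpha>) + \<delta> / 2 \<le> frac (\<rho> + real p * \<alpha>)"
      "frac (\<rho> + real p * \<alpha>) < frac (of_int r * \<alpha>) + \<delta> / 2 + \<delta> / 2"
    using frac_orbit_bounded_gaps_interval[of M \<alpha> "\<delta> / 2" "frac (of_int r * \<alpha>) + \<delta> / 2" \<rho>]
      \<delta>_le[of 0] \<open>0 < \<delta>\<close> by auto
  \<comment> \<open>The factor at \<open>p\<close> reads the orbit of \<open>r \<alpha>\<close> shifted by less than \<open>\<delta>\<close>, which never crosses an integer.\<close>
  have translate: "frac (\<rho> + real (p + j) * \<alpha>) = frac (of_int (r + int j) * \<alpha>) + (frac (\<rho> + real p * \<alpha>) - frac (of_int r * \<alpha>))"
      "\<lfloor>\<rho> + real p * \<alpha> + real j * \<alpha>\<rfloor> - \<lfloor>\<rho> + real p * \<alpha>\<rfloor> = \<lfloor>of_int (r + int j) * \<alpha>\<rfloor> - \<lfloor>of_int r * \<alpha>\<rfloor>"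
    if "j \<le> n" for j
  proof -
    have x_eq: "of_int r * \<alpha> + real j * \<alpha> = of_int (r + int j) * \<alpha>"
      and y_eq: "\<rho> + real p * \<alpha> + real j * \<alpha> = \<rho> + real (p + j) * \<alpha>"
      by (simp_all add: algebra_simps)
    have "frac (of_int r * \<alpha>) < frac (\<rho> + real p * \<alpha>)"
      "frac (of_int r * \<alpha> + real j * \<alpha>) + (frac (\<rho> + real p * \<alpha>) - frac (of_int r * \<alpha>)) < 1"
      using p \<delta>_le[OF that] \<open>0 < \<delta>\<close> unfolding x_eq by linarith+
    from frac_floor_translate[OF this]
    show "frac (\<rho> + real (p + j) * \<alpha>) = frac (of_int (r + int j) * \<alpha>) + (frac (\<rho> + real p * \<alpha>) - frac (of_int r * \<alpha>))"
      "\<lfloor>\<rho> + real p * \<alpha> + real j * \<alpha>\<rfloor> - \<lfloor>\<rho> + real p * \<alpha>\<rfloor> = \<lfloor>of_int (r + int j) * \<alpha>\<rfloor> - \<lfloor>of_int r * \<alpha>\<rfloor>"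
      unfolding x_eq y_eq by blast+
  qed
  have frac_pos: "0 < frac (\<rho> + real (p + j) * \<alpha>)" if "j \<le> n" for j
    using translate(1)[OF that] p \<open>0 < \<delta>\<close> frac_ge_0[of "of_int (r + int j) * \<alpha>"] by linarith
  have letters: "map (\<lambda>i. w (p + i)) [0..<j] = map (\<lambda>i. sturmian_letter \<alpha> (\<rho> + real p * \<alpha> + real i * \<alpha>)) [0..<j]"
    if "j \<le> n" for j
  proof (rule map_cong)
    fix i assume "i \<in> set [0..<j]"
    then have "w (p + i) = sturmian_letter \<alpha> (\<rho> + real (p + i) * \<alpha>)"
      using that frac_pos[of i] frac_pos[of "Suc i"] by (intro sturmian_letter_at[OF w]) simp_all
    then show "w (p + i) = sturmian_letter \<alpha> (\<rho> + real p * \<alpha> + real i * \<alpha>)"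
      by (simp add: algebra_simps)
  qed simp
  have "int (count_list (map (\<lambda>i. w (p + i)) [0..<j]) a)
          = \<lfloor>of_int (r + int j) * \<alpha>\<rfloor> - \<lfloor>of_int r * \<alpha>\<rfloor>" if "j \<le> n" for j
    unfolding letters[OF that] count_a_sturmian_letters[OF assms(1,2)] by (rule translate(2)[OF that])
  then show ?thesis
    by blast
qed

lemma floor_mult_increments_determine_start:
  fixes \<alpha> :: real and r r' :: int
  assumes "\<alpha> \<notin> \<rat>" "- int n \<le> r" "r \<le> 0" "- int n \<le> r'" "r' \<le> 0"
    and eq: "\<And>j. j \<le> n \<Longrightarrow> \<lfloor>of_int (r + int j) * \<alpha>\<rfloor> - \<lfloor>of_int r * \<alpha>\<rfloor>
                              = \<lfloor>of_int (r' + int j) * \<alpha>\<rfloor> - \<lfloor>of_int r' * \<alpha>\<rfloor>"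
  shows "r = r'"
proof (rule ccontr)
  assume "r \<noteq> r'"
  \<comment> \<open>Reading the increments up to \<open>0\<close> from either start gives \<open>\<lfloor>d\<alpha>\<rfloor> + \<lfloor>-d\<alpha>\<rfloor> = 0\<close> for \<open>d = r' - r\<close>.\<close>
  have "\<lfloor>of_int (r' - r) * \<alpha>\<rfloor> = \<lfloor>of_int r' * \<alpha>\<rfloor> - \<lfloor>of_int r * \<alpha>\<rfloor>"
    using eq[of "nat (- r)"] assms(2,3) by (simp add: algebra_simps)
  moreover have "\<lfloor>of_int (r - r') * \<alpha>\<rfloor> = \<lfloor>of_int r * \<alpha>\<rfloor> - \<lfloor>of_int r' * \<alpha>\<rfloor>"
    using eq[of "nat (- r')"] assms(4,5) by (simp add: algebra_simps)
  moreover have "\<lfloor>of_int (r' - r) * \<alpha>\<rfloor> + \<lfloor>- (of_int (r' - r) * \<alpha>)\<rfloor> = -1"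
    using of_int_mult_irrational_notin_Ints[OF assms(1), of "r' - r"] \<open>r \<noteq> r'\<close>
    by (intro floor_add_floor_uminus) simp
  ultimately show False
    by (simp add: algebra_simps)
qed

lemma card_le_ASF_double_length:
  fixes \<alpha> \<rho> :: real
  assumes "0 < \<alpha>" "\<alpha> < 1" "\<alpha> \<notin> \<rat>"
    and w: "w = sturmian_lower \<alpha> \<rho> \<or> w = sturmian_upper \<alpha> \<rho>"
  shows "card {l. l \<le> 2 * k \<and> 2 * frac (real k * \<alpha>) \<le> frac (real l * \<alpha>)} \<le> ASF w (2 * k)"
proof -
  define F where "F r = \<lfloor>of_int r * \<alpha>\<rfloor>" for r
  have "\<exists>p. \<forall>r. \<forall>j\<le>2 * k. int (count_list (map (\<lambda>i. w (p r + i)) [0..<j]) a) = F (r + int j) - F r"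
    unfolding F_def by (rule choice) (use sturmian_factor_with_prefix_counts[OF assms] in blast)
  then obtain p where p: "\<And>r j. j \<le> 2 * k \<Longrightarrow> int (count_list (map (\<lambda>i. w (p r + i)) [0..<j]) a) = F (r + int j) - F r"
    by blast
  define start where "start l = int l - 2 * int k" for l :: nat
  define fac where "fac l = map (\<lambda>i. w (p (start l) + i)) [0..<2 * k]" for l
  define L where "L = {l. l \<le> 2 * k \<and> 2 * frac (real k * \<alpha>) \<le> frac (real l * \<alpha>)}"
  have prefix: "take j (fac l) = map (\<lambda>i. w (p (start l) + i)) [0..<j]" if "j \<le> 2 * k" for j l
    using that by (simp add: fac_def take_map)
  have "inj_on fac L"
  proof (rule inj_onI)
    fix l l' assume "l \<in> L" "l' \<in> L" "fac l = fac l'"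
    have increments: "F (start l + int j) - F (start l) = F (start l' + int j) - F (start l')"
      if "j \<le> 2 * k" for j
      using p[OF that, of "start l"] p[OF that, of "start l'"] prefix[OF that] \<open>fac l = fac l'\<close> by metis
    have "l \<le> 2 * k" "l' \<le> 2 * k"
      using \<open>l \<in> L\<close> \<open>l' \<in> L\<close> by (simp_all add: L_def)
    then have "- int (2 * k) \<le> start l" "start l \<le> 0" "- int (2 * k) \<le> start l'" "start l' \<le> 0"
      by (simp_all add: start_def)
    then have "start l = start l'"
      using increments unfolding F_def by (rule floor_mult_increments_determine_start[OF assms(3)])
    then show "l = l'"
      by (simp add: start_def)
  qed
  have "abelian_square (fac l)" if "l \<in> L" for l
  proof -
    have "F (int l - int k) = F (int l) - F (int k)" "F (int l - 2 * int k) = F (int l) - 2 * F (int k)"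
      using floor_diff_double[of "real k * \<alpha>" "real l * \<alpha>"] that by (simp_all add: L_def F_def algebra_simps)
    moreover have "start l + int k = int l - int k" "start l + int (2 * k) = int l"
      by (simp_all add: start_def)
    ultimately have "2 * count_list (take k (fac l)) a = count_list (take (2 * k) (fac l)) a"
      using p[of k "start l"] p[of "2 * k" "start l"] prefix[of k l] prefix[of "2 * k" l]
      by (simp add: start_def)
    then show ?thesis
      by (intro abelian_square_if_half_count[of _ k]) (simp_all add: fac_def)
  qed
  moreover have "is_factor w (fac l)" for l
    unfolding is_factor_def fac_def by (intro exI[of _ "p (start l)"]) simp
  ultimately have "fac ` L \<subseteq> {v. length v = 2 * k \<and> is_factor w v \<and> abelian_square v}"
    by (auto simp: fac_def)
  then have "card (fac ` L) \<le> ASF w (2 * k)"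
    unfolding ASF_def by (intro card_mono) (auto intro: finite_subset[OF _ finite_letter_lists_length])
  with \<open>inj_on fac L\<close> show ?thesis
    by (simp add: L_def card_image)
qed

lemma card_ge_of_hits_in_blocks:
  assumes "\<And>s. \<exists>d<M. P (s * M + d)"
  shows "m \<le> card {l. l < m * M \<and> P l}"
proof (induction m)
  case (Suc m)
  obtain d where "d < M" "P (m * M + d)"
    using assms by blast
  then have "insert (m * M + d) {l. l < m * M \<and> P l} \<subseteq> {l. l < Suc m * M \<and> P l}"
    by auto
  then have "card (insert (m * M + d) {l. l < m * M \<and> P l}) \<le> card {l. l < Suc m * M \<and> P l}"
    by (intro card_mono) auto
  then show ?case
    using Suc by simp
qed simp

lemma sum_ge_quadratic_if_block_values:
  fixes f :: "nat \<Rightarrow> real"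
  assumes "L > 0" "\<And>m. 0 \<le> f m" "\<And>q. \<exists>m. q * L \<le> m \<and> m < (q + 1) * L \<and> real q \<le> f m"
  shows "\<exists>C>0. \<exists>N. \<forall>n\<ge>N. C * (real n)^2 \<le> (\<Sum>m\<le>n. f m)"
proof -
  obtain g where g: "\<And>q. q * L \<le> g q" "\<And>q. g q < (q + 1) * L" "\<And>q. real q \<le> f (g q)"
    using assms(3) by metis
  have "strict_mono g"
    using g(1,2) by (intro strict_monoI_Suc) (metis add.commute less_le_trans mult_Suc plus_1_eq_Suc)
  have "(real n / (2 * L))^2 / 2 \<le> (\<Sum>m\<le>n. f m)" if "4 * L \<le> n" for n
  proof -
    define Q where "Q = n div L"
    have "g ` {..<Q} \<subseteq> {..n}"
    proof
      fix m assume "m \<in> g ` {..<Q}"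
      then obtain q where "q < Q" "m = g q"
        by blast
      then have "m < Q * L"
        using g(2)[of q] mult_le_mono1[of "q + 1" Q L] by simp
      moreover have "Q * L \<le> n"
        unfolding Q_def using div_mult_mod_eq[of n L] by linarith
      ultimately show "m \<in> {..n}"
        by simp
    qed
    have "real Q * (real Q - 1) / 2 = (\<Sum>q<Q. real q)"
      by (induction Q) (simp_all add: field_simps)
    also have "\<dots> \<le> (\<Sum>q<Q. f (g q))"
      by (intro sum_mono g(3))
    also have "\<dots> = (\<Sum>m\<in>g ` {..<Q}. f m)"
      using strict_mono_imp_inj_on[OF \<open>strict_mono g\<close>] by (simp add: sum.reindex inj_on_subset)
    also have "\<dots> \<le> (\<Sum>m\<le>n. f m)"
      using \<open>g ` {..<Q} \<subseteq> {..n}\<close> assms(2) by (intro sum_mono2) auto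
    finally have sum: "real Q * (real Q - 1) / 2 \<le> (\<Sum>m\<le>n. f m)" .
    have "n < (Q + 1) * L"
      using \<open>L > 0\<close> by (simp add: Q_def dividend_less_div_times)
    then have "real n < (real Q + 1) * real L"
      by (metis of_nat_add of_nat_less_iff of_nat_mult of_nat_1)
    then have Q: "real n / (2 * L) \<le> real Q - 1"
      using \<open>L > 0\<close> that by (simp add: field_simps)
    have "(real n / (2 * L))^2 \<le> real Q * (real Q - 1)"
      unfolding power2_eq_square using Q by (intro mult_mono) auto
    with sum show ?thesis
      by simp
  qed
  then have "\<forall>n\<ge>4 * L. 1 / (8 * real L ^ 2) * (real n)^2 \<le> (\<Sum>m\<le>n. f m)"
    by (simp add: power_divide field_simps)
  then show ?thesis
    using \<open>L > 0\<close> by (intro exI[of _ "1 / (8 * real L ^ 2)"]) auto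
qed

theorem theorem3:
  fixes \<alpha> \<rho> :: real and w :: "nat \<Rightarrow> letter"
  assumes "0 < \<alpha>" "\<alpha> < 1" "\<alpha> \<notin> \<rat>"
    and "bounded_partial_quotients \<alpha>"
    and "0 \<le> \<rho>" "\<rho> < 1"
    and "w = sturmian_lower \<alpha> \<rho> \<or> w = sturmian_upper \<alpha> \<rho>"
  shows "\<exists>C > 0. \<exists>N. \<forall>n \<ge> N. (\<Sum>m\<le>n. real (ASF w m)) \<ge> C * (real n)^2"
proof -
  obtain M where "M > 0" and gaps: "\<And>x. \<exists>d<M. frac (x + real d * \<alpha>) < 1 / 4"
    using frac_orbit_bounded_gaps[OF assms(3), of "1 / 4"] by auto
  have upper_half: "\<exists>d<M. 1 / 2 \<le> frac (real (s * M + d) * \<alpha>)" for s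
    using frac_orbit_bounded_gaps_interval[OF gaps, of "1 / 2" "real (s * M) * \<alpha>"]
    by (auto simp: algebra_simps)
  have "\<exists>m. q * (2 * M) \<le> m \<and> m < (q + 1) * (2 * M) \<and> real q \<le> real (ASF w m)" for q
  proof -
    obtain d where "d < M" and d: "frac (real (q * M + d) * \<alpha>) < 1 / 4"
      using gaps[of "real (q * M) * \<alpha>"] by (auto simp: algebra_simps)
    define k where "k = q * M + d"
    have "2 * q \<le> card {l. l < 2 * q * M \<and> 1 / 2 \<le> frac (real l * \<alpha>)}"
      using card_ge_of_hits_in_blocks[of M "\<lambda>l. 1 / 2 \<le> frac (real l * \<alpha>)"] upper_half by blast
    also have "\<dots> \<le> card {l. l \<le> 2 * k \<and> 2 * frac (real k * \<alpha>) \<le> frac (real l * \<alpha>)}"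
      using d by (intro card_mono) (auto simp: k_def)
    also have "\<dots> \<le> ASF w (2 * k)"
      using card_le_ASF_double_length[OF assms(1-3,7)] .
    finally show ?thesis
      using \<open>d < M\<close> by (intro exI[of _ "2 * k"]) (auto simp: k_def)
  qed
  then show ?thesis
    using sum_ge_quadratic_if_block_values[of "2 * M" "\<lambda>m. real (ASF w m)"] \<open>M > 0\<close> by auto
qed

end
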